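(* Let $\Omega\colon\mathbb{R}\to\mathbb{R}_+$ be a continual diagram and let $a<a_0<b_0<b$ be real numbers such that the restriction of $\Omega$ to $[a,b]$ is $(1-\delta)$-Lipschitz for some constant $\delta>0$ and the restriction of $\mu_\Omega$ to $[a,b]$ is absolutely continuous with a density bounded from above by some constant. For $z_0\in\mathbb{R}$ and $\epsilon>0$ let $z_+^{\max}=z_+^{\max}(z_0,\epsilon)$ denote the maximal solution $z$ of the equation \[\Omega(z-\epsilon)-\Omega(z_0-\epsilon)=z-z_0-2\epsilon.\] Then there exists a constant $\epsilon_0>0$ such that for each $z_0\in[a_0,b_0]$ and each $\epsilon\in(0,\epsilon_0)$, \[z_+^{\max}-z_0\le\frac{2\epsilon}{\delta}.\]
   Context: A continual diagram is a function $\omega\colon\mathbb{R}\to\mathbb{R}_+$ such that $|\omega(z_1)-\omega(z_2)|\le|z_1-z_2|$ for all $z_1,z_2$, and $\omega(z)=|z|$ for all sufficiently large $|z|$. Its transition measure $\mu_\omega$ is the probability measure whose Cauchy transform $\mathbf{G}_\omega(z)=\int\frac{d\mu_\omega(x)}{z-x}$ satisfies $\log[z\,\mathbf{G}_\omega(z)]=-\int_{-\infty}^\infty\frac{1}{z-w}\big(\frac{\omega(w)-|w|}{2}\big)'\,dw$ for $z\in\mathbb{C}\setminus\mathbb{R}$. *)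

theory Defs
  imports "HOL-Probability.Probability"
begin

definition continual_diagram :: "(real \<Rightarrow> real) \<Rightarrow> bool" where
  "continual_diagram \<omega> \<longleftrightarrow>
     (\<forall>z. 0 \<le> \<omega> z) \<and>
     (\<forall>z1 z2. \<bar>\<omega> z1 - \<omega> z2\<bar> \<le> \<bar>z1 - z2\<bar>) \<and>
     (\<exists>R. \<forall>z. R \<le> \<bar>z\<bar> \<longrightarrow> \<omega> z = \<bar>z\<bar>)"

definition cauchy_transform :: "real measure \<Rightarrow> complex \<Rightarrow> complex" where
  "cauchy_transform \<mu> z = (\<integral>x. 1 / (z - complex_of_real x) \<partial>\<mu>)"

text \<open>\<mu> is the transition measure of \<omega>: a Borel probability measure on the real line with
  log(z G(z)) = - \<integral> (z-w)^(-1) \<sigma>'(w) dw, where \<sigma> w = (\<omega> w - |w|)/2 and \<sigma>' is its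
  (a.e.) derivative, represented by a function g with \<sigma> y - \<sigma> x = \<integral>_x^y g.
  The logarithmic identity is written in exponentiated form to avoid branch issues.\<close>
definition transition_measure :: "(real \<Rightarrow> real) \<Rightarrow> real measure \<Rightarrow> bool" where
  "transition_measure \<omega> \<mu> \<longleftrightarrow>
     prob_space \<mu> \<and> sets \<mu> = sets borel \<and>
     (\<exists>g :: real \<Rightarrow> real.
        (\<forall>x y. x \<le> y \<longrightarrow>
           (g has_integral ((\<omega> y - \<bar>y\<bar>) / 2 - (\<omega> x - \<bar>x\<bar>) / 2)) {x..y}) \<and>
        (\<forall>z. Im z \<noteq> 0 \<longrightarrow>
           z * cauchy_transform \<mu> z =
             exp (- integral UNIV (\<lambda>w. complex_of_real (g w) / (z - complex_of_real w)))))"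

definition z_plus_max :: "(real \<Rightarrow> real) \<Rightarrow> real \<Rightarrow> real \<Rightarrow> real" where
  "z_plus_max \<Omega> z0 \<epsilon> =
     (GREATEST z. \<Omega> (z - \<epsilon>) - \<Omega> (z0 - \<epsilon>) = z - z0 - 2 * \<epsilon>)"

end

theory Submission
  imports Defs
begin

text \<open>Write \<open>x = z - \<epsilon>\<close> and \<open>x\<^sub>0 = z\<^sub>0 - \<epsilon>\<close>, so that the equation defining
  \<open>z\<^sub>+\<close> reads \<open>\<Omega> x - \<Omega> x\<^sub>0 = x - x\<^sub>0 - 2\<epsilon>\<close>. Since \<open>\<Omega>\<close> is 1-Lipschitz everywhere and
  \<open>(1 - \<delta>)\<close>-Lipschitz on \<open>[a, b]\<close>, the increment \<open>\<Omega> x - \<Omega> x\<^sub>0\<close> falls short of \<open>x - x\<^sub>0\<close>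
  by at least \<open>\<delta> (min x b - x\<^sub>0)\<close>. For a solution this shortfall is at most \<open>2\<epsilon>\<close>; once \<open>\<epsilon>\<close>
  is so small that \<open>2\<epsilon> < \<delta> (b - x\<^sub>0)\<close>, this forces \<open>x \<le> b\<close> and then \<open>\<delta> (x - x\<^sub>0) \<le> 2\<epsilon>\<close>.
  The same estimate at \<open>x = b\<close> together with the intermediate value theorem shows that
  solutions exist, and they form a closed set, so the maximal solution is attained.\<close>

lemma continual_diagram_nonexpansive:
  assumes "continual_diagram \<Omega>"
  shows "\<bar>\<Omega> x - \<Omega> y\<bar> \<le> \<bar>x - y\<bar>"
  using assms unfolding continual_diagram_def by blast

lemma nonexpansive_continuous_on:
  fixes f :: "real \<Rightarrow> real"
  assumes "\<And>x y. \<bar>f x - f y\<bar> \<le> \<bar>x - y\<bar>"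
  shows "continuous_on S f"
  by (rule lipschitz_on_continuous_on[of 1], rule lipschitz_onI)
    (use assms in \<open>auto simp: dist_real_def\<close>)

lemma increment_le_shortfall:
  fixes f :: "real \<Rightarrow> real"
  assumes nonexp: "\<And>x y. \<bar>f x - f y\<bar> \<le> \<bar>x - y\<bar>"
    and contr: "\<forall>x\<in>{a..b}. \<forall>y\<in>{a..b}. \<bar>f x - f y\<bar> \<le> (1 - \<delta>) * \<bar>x - y\<bar>"
    and "a \<le> x0" "x0 \<le> b" "x0 \<le> x"
  shows "f x - f x0 \<le> x - x0 - \<delta> * (min x b - x0)"
proof (cases "x \<le> b")
  case True
  then have "\<bar>f x - f x0\<bar> \<le> (1 - \<delta>) * (x - x0)"
    using contr[rule_format, of x x0] assms(3-5) by simp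
  then show ?thesis using True by (simp add: algebra_simps)
next
  case False
  have "f x - f b \<le> x - b" using nonexp[of x b] False by simp
  moreover have "\<bar>f b - f x0\<bar> \<le> (1 - \<delta>) * (b - x0)"
    using contr[rule_format, of b x0] assms(3,4) by simp
  ultimately show ?thesis using False by (simp add: algebra_simps)
qed

lemma gap_equation_solution_le:
  fixes f :: "real \<Rightarrow> real"
  assumes nonexp: "\<And>x y. \<bar>f x - f y\<bar> \<le> \<bar>x - y\<bar>"
    and contr: "\<forall>x\<in>{a..b}. \<forall>y\<in>{a..b}. \<bar>f x - f y\<bar> \<le> (1 - \<delta>) * \<bar>x - y\<bar>"
    and "a \<le> x0" "0 < \<delta>" "0 \<le> \<epsilon>" and small: "2 * \<epsilon> < \<delta> * (b - x0)"
    and sol: "f x - f x0 = x - x0 - 2 * \<epsilon>"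
  shows "x - x0 \<le> 2 * \<epsilon> / \<delta>"
proof (cases "x0 \<le> x")
  case True
  have "x0 \<le> b" using assms(4-6) by (smt (verit) mult_le_0_iff)
  then have shortfall: "\<delta> * (min x b - x0) \<le> 2 * \<epsilon>"
    using increment_le_shortfall[OF nonexp contr \<open>a \<le> x0\<close> _ True] sol by simp
  then have "x \<le> b" using small by (cases "x \<le> b") auto
  then have "\<delta> * (x - x0) \<le> 2 * \<epsilon>" using shortfall by simp
  then show ?thesis using \<open>0 < \<delta>\<close> by (simp add: field_simps)
next
  case False
  then show ?thesis using assms(4,5) by (smt (verit) divide_nonneg_pos)
qed

lemma gap_equation_solvable:
  fixes f :: "real \<Rightarrow> real"
  assumes nonexp: "\<And>x y. \<bar>f x - f y\<bar> \<le> \<bar>x - y\<bar>"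
    and contr: "\<forall>x\<in>{a..b}. \<forall>y\<in>{a..b}. \<bar>f x - f y\<bar> \<le> (1 - \<delta>) * \<bar>x - y\<bar>"
    and "a \<le> x0" "0 < \<delta>" "0 \<le> \<epsilon>" and small: "2 * \<epsilon> < \<delta> * (b - x0)"
  shows "\<exists>x. f x - f x0 = x - x0 - 2 * \<epsilon>"
proof -
  define g where "g x = f x - f x0 - (x - x0 - 2 * \<epsilon>)" for x
  have "x0 \<le> b" using assms(4-6) by (smt (verit) mult_le_0_iff)
  then have "f b - f x0 \<le> b - x0 - \<delta> * (b - x0)"
    using increment_le_shortfall[OF nonexp contr \<open>a \<le> x0\<close>, of b] by simp
  then have "g b \<le> 0" using small by (simp add: g_def)
  moreover have "0 \<le> g x0" using \<open>0 \<le> \<epsilon>\<close> by (simp add: g_def)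
  moreover have "continuous_on {x0..b} g"
    unfolding g_def by (intro continuous_intros nonexpansive_continuous_on nonexp)
  ultimately obtain x where "g x = 0" using IVT2'[of g b 0 x0] \<open>x0 \<le> b\<close> by auto
  then show ?thesis by (auto simp: g_def)
qed

lemma Greatest_le_if_closed:
  fixes P :: "real \<Rightarrow> bool"
  assumes "closed {x. P x}" "P x" "\<And>y. P y \<Longrightarrow> y \<le> B"
  shows "(GREATEST x. P x) \<le> B"
proof -
  have bdd: "bdd_above {x. P x}" using assms(3) by (intro bdd_aboveI[of _ B]) simp
  then have "P (Sup {x. P x})"
    using closed_contains_Sup[of "{x. P x}"] assms(1,2) by auto
  then have "(GREATEST x. P x) = Sup {x. P x}"
    by (rule Greatest_equality) (use bdd in \<open>auto intro: cSup_upper\<close>)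
  then show ?thesis using \<open>P (Sup {x. P x})\<close> assms(3) by simp
qed

theorem lemma7p1:
  fixes \<Omega> :: "real \<Rightarrow> real" and \<mu> :: "real measure"
    and a a0 b0 b \<delta> :: real
  assumes diag: "continual_diagram \<Omega>"
    and tm: "transition_measure \<Omega> \<mu>"
    and ord: "a < a0" "a0 < b0" "b0 < b"
    and delta: "\<delta> > 0"
    and lip: "\<forall>x\<in>{a..b}. \<forall>y\<in>{a..b}. \<bar>\<Omega> x - \<Omega> y\<bar> \<le> (1 - \<delta>) * \<bar>x - y\<bar>"
    and dens: "\<exists>f :: real \<Rightarrow> real. \<exists>C. f \<in> borel_measurable borel \<and>
                 (\<forall>x. 0 \<le> f x \<and> f x \<le> C) \<and>
                 (\<forall>A \<in> sets borel. A \<subseteq> {a..b} \<longrightarrow>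
                    emeasure \<mu> A = (\<integral>\<^sup>+ x. ennreal (f x) * indicator A x \<partial>lborel))"
  shows "\<exists>\<epsilon>0 > 0. \<forall>z0 \<in> {a0..b0}. \<forall>\<epsilon>. 0 < \<epsilon> \<and> \<epsilon> < \<epsilon>0 \<longrightarrow>
           z_plus_max \<Omega> z0 \<epsilon> - z0 \<le> 2 * \<epsilon> / \<delta>"
proof (intro exI[of _ "min (a0 - a) (\<delta> * (b - b0) / 2)"] conjI ballI allI impI)
  show "0 < min (a0 - a) (\<delta> * (b - b0) / 2)" using ord delta by simp
  fix z0 \<epsilon>
  assume z0: "z0 \<in> {a0..b0}" and \<epsilon>: "0 < \<epsilon> \<and> \<epsilon> < min (a0 - a) (\<delta> * (b - b0) / 2)"
  have nonexp: "\<And>x y. \<bar>\<Omega> x - \<Omega> y\<bar> \<le> \<bar>x - y\<bar>"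
    using diag by (rule continual_diagram_nonexpansive)
  have "\<delta> * (b - b0) \<le> \<delta> * (b - (z0 - \<epsilon>))"
    using z0 \<epsilon> delta by (intro mult_left_mono) auto
  then have x0: "a \<le> z0 - \<epsilon>" "2 * \<epsilon> < \<delta> * (b - (z0 - \<epsilon>))"
    using z0 \<epsilon> by auto
  have closed: "closed {z. \<Omega> (z - \<epsilon>) - \<Omega> (z0 - \<epsilon>) = z - z0 - 2 * \<epsilon>}"
    by (intro closed_Collect_eq continuous_intros
        continuous_on_compose2[OF nonexpansive_continuous_on[OF nonexp]]) auto
  obtain x where "\<Omega> x - \<Omega> (z0 - \<epsilon>) = x - (z0 - \<epsilon>) - 2 * \<epsilon>"
    using gap_equation_solvable[OF nonexp lip x0(1) delta _ x0(2)] \<epsilon> by auto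
  then have sol: "\<Omega> ((x + \<epsilon>) - \<epsilon>) - \<Omega> (z0 - \<epsilon>) = (x + \<epsilon>) - z0 - 2 * \<epsilon>" by simp
  have bound: "z \<le> z0 + 2 * \<epsilon> / \<delta>"
    if "\<Omega> (z - \<epsilon>) - \<Omega> (z0 - \<epsilon>) = z - z0 - 2 * \<epsilon>" for z
    using gap_equation_solution_le[OF nonexp lip x0(1) delta _ x0(2), of "z - \<epsilon>"] that \<epsilon> by simp
  show "z_plus_max \<Omega> z0 \<epsilon> - z0 \<le> 2 * \<epsilon> / \<delta>"
    using Greatest_le_if_closed[OF closed sol bound] unfolding z_plus_max_def by simp
qed

end
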